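(* Let $V=\{1,\dots,n\}$, let $H_1=(V,E_1)$ with $E_1=\{e\subseteq V : |e|\ge 2\}$, and let $H_2=(V,E_2)$ with $E_2=\{e\subseteq V : 2\le|e|\le 3\}$. If the toric ideal $I_{H_2}$ is generated in degree at most $d$, then the toric ideal $I_{H_1}$ is generated in degree at most $d$.
   Context: For a hypergraph $H=(V,E)$ (edges are nonempty subsets of $V=\{1,\dots,n\}$, no repeated edges) and a field $K$, the toric ideal $I_H$ is the kernel of the $K$-algebra homomorphism $K[t_e : e\in E]\to K[x_1,\dots,x_n]$, $t_e\mapsto\prod_{j\in e}x_j$. An ideal is generated in degree at most $d$ if it has a generating set consisting of polynomials of degree at most $d$. *)

theory Defs
  imports "HOL-Library.Poly_Mapping"
begin

(* Multivariate polynomials over a coefficient ring 'k in variables of type 'v: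
  finitely supported maps from monomials (exponent vectors 'v =>0 nat) to coefficients. *)
type_synonym ('v, 'k) mpoly = "('v \<Rightarrow>\<^sub>0 nat) \<Rightarrow>\<^sub>0 'k"

definition Var :: "'v \<Rightarrow> ('v, 'k::comm_ring_1) mpoly" where
  "Var v = Poly_Mapping.single (Poly_Mapping.single v 1) 1"

definition Const :: "'k::comm_ring_1 \<Rightarrow> ('v, 'k) mpoly" where
  "Const c = Poly_Mapping.single 0 c"

(* The polynomial ring K[t_e : e in E], as a subring of all polynomials in variables 'v. *)
definition poly_ring :: "'v set \<Rightarrow> ('v, 'k::comm_ring_1) mpoly set" where
  "poly_ring E = {p. \<forall>m \<in> Poly_Mapping.keys p. Poly_Mapping.keys m \<subseteq> E}"

(* Total degree (the zero polynomial gets degree 0). *)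
definition total_deg :: "('v, 'k::comm_ring_1) mpoly \<Rightarrow> nat" where
  "total_deg p = Max (insert 0 ((\<lambda>m. sum (Poly_Mapping.lookup m) (Poly_Mapping.keys m)) ` Poly_Mapping.keys p))"

definition ideal_in :: "('v, 'k::comm_ring_1) mpoly set \<Rightarrow> ('v, 'k) mpoly set \<Rightarrow> ('v, 'k) mpoly set" where
  "ideal_in R G = \<Inter>{I. G \<subseteq> I \<and> I \<subseteq> R \<and> 0 \<in> I \<and> (\<forall>a\<in>I. \<forall>b\<in>I. a + b \<in> I)
                        \<and> (\<forall>r\<in>R. \<forall>a\<in>I. r * a \<in> I)}"

definition generated_in_degree_le :: "('v, 'k::comm_ring_1) mpoly set \<Rightarrow> ('v, 'k) mpoly set \<Rightarrow> nat \<Rightarrow> bool" where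
  "generated_in_degree_le R I d \<longleftrightarrow> (\<exists>G \<subseteq> I. (\<forall>g\<in>G. total_deg g \<le> d) \<and> ideal_in R G = I)"

definition toric_hom :: "(nat set, 'k::comm_ring_1) mpoly \<Rightarrow> (nat, 'k) mpoly" where
  "toric_hom p = (\<Sum>m \<in> Poly_Mapping.keys p. Const (Poly_Mapping.lookup p m) *
       (\<Prod>e \<in> Poly_Mapping.keys m. (\<Prod>j\<in>e. Var j) ^ Poly_Mapping.lookup m e))"

definition toric_ideal :: "nat set set \<Rightarrow> (nat set, 'k::comm_ring_1) mpoly set" where
  "toric_ideal E = {p \<in> poly_ring E. toric_hom p = 0}"

definition E_all :: "nat \<Rightarrow> nat set set" where
  "E_all n = {e. e \<subseteq> {1..n} \<and> 2 \<le> card e}"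

definition E_23 :: "nat \<Rightarrow> nat set set" where
  "E_23 n = {e. e \<subseteq> {1..n} \<and> 2 \<le> card e \<and> card e \<le> 3}"

end

theory Submission
  imports Defs
begin

text \<open>
  An edge \<open>e\<close> with \<open>|e| \<ge> 4\<close> is the disjoint union of edges \<open>a\<close>, \<open>b\<close> of \<open>H\<^sub>1\<close>, so the quadratic
  binomial \<open>t\<^sub>e - t\<^sub>a t\<^sub>b\<close> lies in \<open>I\<^sub>H\<^sub>1\<close>. Modulo these binomials every monomial of \<open>K[t\<^sub>e : e \<in> E\<^sub>1]\<close>
  is congruent to one using only edges of size at most 3 and having the same image (the weight
  \<open>\<Sigma> |e|\<^sup>2\<close> strictly drops in each step). Hence every element of \<open>I\<^sub>H\<^sub>1\<close> is congruent to an element of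
  \<open>I\<^sub>H\<^sub>2\<close>, and generators of \<open>I\<^sub>H\<^sub>2\<close> together with the binomials generate \<open>I\<^sub>H\<^sub>1\<close>. The binomials have
  degree 2, which is harmless: for \<open>n \<ge> 4\<close> the ideal \<open>I\<^sub>H\<^sub>2\<close> is nonzero but contains no nonzero
  polynomial of degree at most 1, so \<open>d \<ge> 2\<close>; for \<open>n \<le> 3\<close> the two hypergraphs coincide.
\<close>

section \<open>The toric homomorphism\<close>

definition edge_monom :: "nat set \<Rightarrow> (nat, 'k::comm_ring_1) mpoly" where
  "edge_monom e = (\<Prod>j\<in>e. Var j)"

definition toric_monom :: "(nat set \<Rightarrow>\<^sub>0 nat) \<Rightarrow> (nat, 'k::comm_ring_1) mpoly" where
  "toric_monom m = (\<Prod>e \<in> Poly_Mapping.keys m. edge_monom e ^ Poly_Mapping.lookup m e)"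

lemma toric_hom_eq_sum_toric_monom:
  "toric_hom p = (\<Sum>m \<in> Poly_Mapping.keys p. Const (Poly_Mapping.lookup p m) * toric_monom m)"
  unfolding toric_hom_def toric_monom_def edge_monom_def by simp

lemma toric_monom_superset:
  assumes "finite S" "Poly_Mapping.keys m \<subseteq> S"
  shows "toric_monom m = (\<Prod>e \<in> S. edge_monom e ^ Poly_Mapping.lookup m e)"
  unfolding toric_monom_def
  by (rule prod.mono_neutral_left) (use assms in \<open>auto simp: in_keys_iff\<close>)

lemma toric_monom_zero [simp]: "toric_monom 0 = 1"
  unfolding toric_monom_def by simp

lemma toric_monom_single [simp]: "toric_monom (Poly_Mapping.single e k) = edge_monom e ^ k"
  unfolding toric_monom_def by simp

lemma toric_monom_add: "toric_monom (a + b) = toric_monom a * toric_monom b"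
proof -
  let ?S = "Poly_Mapping.keys a \<union> Poly_Mapping.keys b"
  have "toric_monom (a + b) = (\<Prod>e \<in> ?S. edge_monom e ^ Poly_Mapping.lookup (a + b) e)"
    using keys_add[of a b] by (intro toric_monom_superset) auto
  also have "\<dots> = (\<Prod>e \<in> ?S. edge_monom e ^ Poly_Mapping.lookup a e)
                 * (\<Prod>e \<in> ?S. edge_monom e ^ Poly_Mapping.lookup b e)"
    by (simp add: lookup_add power_add prod.distrib)
  also have "\<dots> = toric_monom a * toric_monom b"
    by (subst (1 2) toric_monom_superset[of ?S]) auto
  finally show ?thesis .
qed

lemma edge_monom_union:
  "a \<inter> b = {} \<Longrightarrow> finite a \<Longrightarrow> finite b \<Longrightarrow> edge_monom (a \<union> b) = edge_monom a * edge_monom b"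
  unfolding edge_monom_def by (rule prod.union_disjoint) auto

lemma Const_add: "Const (a + b) = Const a + Const b"
  unfolding Const_def by (simp add: single_add)

lemma Const_mult: "Const (a * b) = Const a * Const b"
  unfolding Const_def by (simp add: mult_single)

lemma Const_mult_single: "Const c * Poly_Mapping.single m 1 = Poly_Mapping.single m c"
  unfolding Const_def by (simp add: mult_single)

lemma Const_minus_one: "Const (-1) = (-1 :: ('v, 'k::comm_ring_1) mpoly)"
  unfolding Const_def by (simp add: single_uminus)

lemma toric_hom_superset:
  assumes "finite S" "Poly_Mapping.keys p \<subseteq> S"
  shows "toric_hom p = (\<Sum>m \<in> S. Const (Poly_Mapping.lookup p m) * toric_monom m)"
  unfolding toric_hom_eq_sum_toric_monom
  by (rule sum.mono_neutral_left) (use assms in \<open>auto simp: in_keys_iff Const_def\<close>)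

lemma toric_hom_add: "toric_hom (p + q) = toric_hom p + toric_hom q"
proof -
  let ?S = "Poly_Mapping.keys p \<union> Poly_Mapping.keys q"
  have "toric_hom (p + q) = (\<Sum>m \<in> ?S. Const (Poly_Mapping.lookup (p + q) m) * toric_monom m)"
    using keys_add[of p q] by (intro toric_hom_superset) auto
  also have "\<dots> = (\<Sum>m \<in> ?S. Const (Poly_Mapping.lookup p m) * toric_monom m)
                 + (\<Sum>m \<in> ?S. Const (Poly_Mapping.lookup q m) * toric_monom m)"
    by (simp add: lookup_add Const_add distrib_right sum.distrib)
  also have "\<dots> = toric_hom p + toric_hom q"
    by (subst (1 2) toric_hom_superset[of ?S]) auto
  finally show ?thesis .
qed

lemma toric_hom_zero [simp]: "toric_hom 0 = 0"
  unfolding toric_hom_def by simp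

lemma toric_hom_diff: "toric_hom (p - q) = toric_hom p - toric_hom q"
  using toric_hom_add[of "p - q" q] by (simp add: eq_diff_eq)

lemma toric_hom_sum: "toric_hom (sum f A) = (\<Sum>a\<in>A. toric_hom (f a))"
  by (induction A rule: infinite_finite_induct) (auto simp: toric_hom_add)

lemma toric_hom_single: "toric_hom (Poly_Mapping.single m c) = Const c * toric_monom m"
  by (cases "c = 0") (auto simp: toric_hom_eq_sum_toric_monom Const_def)

lemma poly_mapping_sum_single:
  "p = (\<Sum>m \<in> Poly_Mapping.keys p. Poly_Mapping.single m (Poly_Mapping.lookup p m))"
  by (rule poly_mapping_eqI) (simp add: lookup_sum lookup_single when_def in_keys_iff)

lemma toric_hom_mult: "toric_hom (p * q) = toric_hom p * toric_hom q"
proof -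
  let ?P = "Poly_Mapping.keys p" and ?Q = "Poly_Mapping.keys q"
  have "p * q = (\<Sum>a\<in>?P. Poly_Mapping.single a (Poly_Mapping.lookup p a))
              * (\<Sum>b\<in>?Q. Poly_Mapping.single b (Poly_Mapping.lookup q b))"
    by (subst (1) poly_mapping_sum_single, subst (2) poly_mapping_sum_single) (rule refl)
  also have "\<dots> = (\<Sum>a\<in>?P. \<Sum>b\<in>?Q.
                    Poly_Mapping.single (a + b) (Poly_Mapping.lookup p a * Poly_Mapping.lookup q b))"
    by (simp add: sum_product mult_single)
  finally have "toric_hom (p * q) = (\<Sum>a\<in>?P. \<Sum>b\<in>?Q.
      Const (Poly_Mapping.lookup p a) * toric_monom a * (Const (Poly_Mapping.lookup q b) * toric_monom b))"
    by (simp add: toric_hom_sum toric_hom_single Const_mult toric_monom_add mult_ac)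
  also have "\<dots> = toric_hom p * toric_hom q"
    by (simp add: toric_hom_eq_sum_toric_monom sum_product)
  finally show ?thesis .
qed

lemma keys_add_single: "Poly_Mapping.keys (m + Poly_Mapping.single a k) \<subseteq> insert a (Poly_Mapping.keys m)"
  using keys_add[of m "Poly_Mapping.single a k"] by (auto split: if_splits)

lemma poly_ring_add: "p \<in> poly_ring E \<Longrightarrow> q \<in> poly_ring E \<Longrightarrow> p + q \<in> poly_ring E"
  unfolding poly_ring_def using keys_add[of p q] by blast

lemma poly_ring_mult:
  assumes "p \<in> poly_ring E" "q \<in> poly_ring E"
  shows "p * q \<in> poly_ring E"
  unfolding poly_ring_def mem_Collect_eq
proof
  fix m assume "m \<in> Poly_Mapping.keys (p * q)"
  then obtain a b where "m = a + b" "a \<in> Poly_Mapping.keys p" "b \<in> Poly_Mapping.keys q"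
    using keys_mult[of p q] by blast
  then show "Poly_Mapping.keys m \<subseteq> E"
    using assms keys_add[of a b] unfolding poly_ring_def by blast
qed

lemma poly_ring_zero [simp]: "0 \<in> poly_ring E"
  unfolding poly_ring_def by simp

lemma poly_ring_single: "Poly_Mapping.keys m \<subseteq> E \<Longrightarrow> Poly_Mapping.single m c \<in> poly_ring E"
  unfolding poly_ring_def by simp

lemma poly_ring_Const [simp]: "Const c \<in> poly_ring E"
  unfolding Const_def by (rule poly_ring_single) simp

lemma poly_ring_diff: "p \<in> poly_ring E \<Longrightarrow> q \<in> poly_ring E \<Longrightarrow> p - q \<in> poly_ring E"
  using poly_ring_add[of p E "Const (-1) * q"] poly_ring_mult[OF poly_ring_Const, of q E "-1"]
  by (simp add: Const_minus_one)

lemma poly_ring_sum: "(\<And>a. a \<in> A \<Longrightarrow> f a \<in> poly_ring E) \<Longrightarrow> sum f A \<in> poly_ring E"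
  by (induction A rule: infinite_finite_induct) (auto simp: poly_ring_add)

lemma poly_ring_mono: "E \<subseteq> F \<Longrightarrow> poly_ring E \<subseteq> poly_ring F"
  unfolding poly_ring_def by blast

lemma toric_ideal_mono: "E \<subseteq> F \<Longrightarrow> toric_ideal E \<subseteq> toric_ideal F"
  unfolding toric_ideal_def using poly_ring_mono by blast

lemma ideal_in_generators: "G \<subseteq> ideal_in R G"
  unfolding ideal_in_def by blast

lemma ideal_in_zero: "0 \<in> ideal_in R G"
  unfolding ideal_in_def by blast

lemma ideal_in_add: "a \<in> ideal_in R G \<Longrightarrow> b \<in> ideal_in R G \<Longrightarrow> a + b \<in> ideal_in R G"
  unfolding ideal_in_def by blast

lemma ideal_in_mult: "r \<in> R \<Longrightarrow> a \<in> ideal_in R G \<Longrightarrow> r * a \<in> ideal_in R G"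
  unfolding ideal_in_def by blast

lemma ideal_in_least:
  assumes "G \<subseteq> I" "I \<subseteq> R" "0 \<in> I" "\<And>a b. a \<in> I \<Longrightarrow> b \<in> I \<Longrightarrow> a + b \<in> I"
    "\<And>r a. r \<in> R \<Longrightarrow> a \<in> I \<Longrightarrow> r * a \<in> I"
  shows "ideal_in R G \<subseteq> I"
  unfolding ideal_in_def by (rule Inter_lower) (use assms in auto)

lemma ideal_in_sum: "(\<And>a. a \<in> A \<Longrightarrow> f a \<in> ideal_in R G) \<Longrightarrow> sum f A \<in> ideal_in R G"
  by (induction A rule: infinite_finite_induct) (auto simp: ideal_in_zero ideal_in_add)

lemma ideal_in_subring_mono:
  assumes "S \<subseteq> R" "G \<subseteq> S" "G \<subseteq> H" "0 \<in> S"
    "\<And>a b. a \<in> S \<Longrightarrow> b \<in> S \<Longrightarrow> a + b \<in> S" "\<And>a b. a \<in> S \<Longrightarrow> b \<in> S \<Longrightarrow> a * b \<in> S"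
  shows "ideal_in S G \<subseteq> ideal_in R H"
  unfolding ideal_in_def
proof (rule Inter_greatest)
  fix I assume "I \<in> {I. H \<subseteq> I \<and> I \<subseteq> R \<and> 0 \<in> I \<and> (\<forall>a\<in>I. \<forall>b\<in>I. a + b \<in> I)
                     \<and> (\<forall>r\<in>R. \<forall>a\<in>I. r * a \<in> I)}"
  then have "I \<inter> S \<in> {I. G \<subseteq> I \<and> I \<subseteq> S \<and> 0 \<in> I \<and> (\<forall>a\<in>I. \<forall>b\<in>I. a + b \<in> I)
                          \<and> (\<forall>r\<in>S. \<forall>a\<in>I. r * a \<in> I)}"
    using assms by blast
  then show "\<Inter>{I. G \<subseteq> I \<and> I \<subseteq> S \<and> 0 \<in> I \<and> (\<forall>a\<in>I. \<forall>b\<in>I. a + b \<in> I)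
                   \<and> (\<forall>r\<in>S. \<forall>a\<in>I. r * a \<in> I)} \<subseteq> I"
    by blast
qed

lemma ideal_in_poly_ring_mono:
  assumes "E \<subseteq> F" "G \<subseteq> poly_ring E" "G \<subseteq> H"
  shows "ideal_in (poly_ring E) G \<subseteq> ideal_in (poly_ring F) H"
  using assms poly_ring_mono[OF assms(1)] poly_ring_add poly_ring_mult
  by (intro ideal_in_subring_mono) auto

lemma ideal_in_toric_ideal:
  assumes "H \<subseteq> toric_ideal E"
  shows "ideal_in (poly_ring E) H \<subseteq> toric_ideal E"
proof (rule ideal_in_least[OF assms])
  show "toric_ideal E \<subseteq> poly_ring E" "0 \<in> toric_ideal E"
    by (auto simp: toric_ideal_def)
  show "a + b \<in> toric_ideal E" if "a \<in> toric_ideal E" "b \<in> toric_ideal E" for a b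
    using that by (simp add: toric_ideal_def poly_ring_add toric_hom_add)
  show "r * a \<in> toric_ideal E" if "r \<in> poly_ring E" "a \<in> toric_ideal E" for r a
    using that by (simp add: toric_ideal_def poly_ring_mult toric_hom_mult)
qed

definition monom_deg :: "('a \<Rightarrow>\<^sub>0 nat) \<Rightarrow> nat" where
  "monom_deg m = sum (Poly_Mapping.lookup m) (Poly_Mapping.keys m)"

lemma total_deg_le_iff: "total_deg p \<le> d \<longleftrightarrow> (\<forall>m \<in> Poly_Mapping.keys p. monom_deg m \<le> d)"
  unfolding total_deg_def monom_deg_def by (subst Max_le_iff) auto

lemma monom_deg_add: "monom_deg (a + b) = monom_deg a + monom_deg b"
  unfolding monom_deg_def by (rule setsum_keys_plus_distrib[where f="\<lambda>k v. v"]) auto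

lemma monom_deg_single [simp]: "monom_deg (Poly_Mapping.single e k) = k"
  unfolding monom_deg_def by simp

lemma monom_deg_le_one:
  assumes "monom_deg m \<le> 1"
  shows "m = 0 \<or> (\<exists>e. m = Poly_Mapping.single e 1)"
proof (cases "m = 0")
  case False
  then obtain e where e: "e \<in> Poly_Mapping.keys m"
    by (metis keys_eq_empty ex_in_conv)
  have deg: "monom_deg m = Poly_Mapping.lookup m e + (\<Sum>k \<in> Poly_Mapping.keys m - {e}. Poly_Mapping.lookup m k)"
    unfolding monom_deg_def using e by (simp add: sum.remove)
  have pos: "Poly_Mapping.lookup m e \<ge> 1"
    using e by (simp add: in_keys_iff)
  with deg assms have "(\<Sum>k \<in> Poly_Mapping.keys m - {e}. Poly_Mapping.lookup m k) = 0"
    by linarith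
  then have "\<forall>k \<in> Poly_Mapping.keys m - {e}. Poly_Mapping.lookup m k = 0"
    by simp
  then have others: "k \<noteq> e \<Longrightarrow> Poly_Mapping.lookup m k = 0" for k
    by (auto simp: in_keys_iff)
  have "Poly_Mapping.lookup m e = 1"
    using deg assms pos by linarith
  with others have "m = Poly_Mapping.single e 1"
    by (intro poly_mapping_eqI) (auto simp: lookup_single when_def)
  then show ?thesis by blast
qed simp

section \<open>Splitting an edge into two disjoint edges\<close>

definition split_binomial :: "nat set \<Rightarrow> nat set \<Rightarrow> (nat set, 'k::comm_ring_1) mpoly" where
  "split_binomial a b = Poly_Mapping.single (Poly_Mapping.single (a \<union> b) 1) 1
                       - Poly_Mapping.single (Poly_Mapping.single a 1 + Poly_Mapping.single b 1) 1"

definition splitting_binomials :: "nat set set \<Rightarrow> (nat set, 'k::comm_ring_1) mpoly set" where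
  "splitting_binomials E = {split_binomial a b | a b.
     a \<in> E \<and> b \<in> E \<and> a \<union> b \<in> E \<and> a \<inter> b = {} \<and> finite a \<and> finite b}"

lemma splitting_binomials_subset_toric_ideal:
  "splitting_binomials E \<subseteq> (toric_ideal E :: (nat set, 'k::comm_ring_1) mpoly set)"
proof
  fix q :: "(nat set, 'k) mpoly" assume "q \<in> splitting_binomials E"
  then obtain a b where q: "q = split_binomial a b" and ab: "a \<in> E" "b \<in> E" "a \<union> b \<in> E"
    and disj: "a \<inter> b = {}" "finite a" "finite b"
    unfolding splitting_binomials_def by blast
  have "q \<in> poly_ring E"
    unfolding q split_binomial_def using ab keys_add_single[of "Poly_Mapping.single a (1::nat)" b 1]
    by (intro poly_ring_diff poly_ring_single) auto
  moreover have "toric_hom q = 0"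
    unfolding q split_binomial_def using disj
    by (simp add: toric_hom_diff toric_hom_single toric_monom_add edge_monom_union)
  ultimately show "q \<in> toric_ideal E"
    unfolding toric_ideal_def by blast
qed

lemma total_deg_split_binomial: "total_deg (split_binomial a b) \<le> 2"
  unfolding total_deg_le_iff
proof
  fix m assume "m \<in> Poly_Mapping.keys (split_binomial a b :: (nat set, 'k::comm_ring_1) mpoly)"
  then have "m = Poly_Mapping.single (a \<union> b) 1 \<or> m = Poly_Mapping.single a 1 + Poly_Mapping.single b 1"
    unfolding split_binomial_def using keys_diff by fastforce
  then show "monom_deg m \<le> 2"
    by (auto simp: monom_deg_add)
qed

definition edges_decompose :: "nat set set \<Rightarrow> nat set set \<Rightarrow> bool" where
  "edges_decompose E F \<longleftrightarrow> (\<forall>e \<in> E - F. finite e \<and>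
     (\<exists>a b. a \<in> E \<and> b \<in> E \<and> e = a \<union> b \<and> a \<inter> b = {} \<and> a \<noteq> {} \<and> b \<noteq> {}))"

definition square_weight :: "(nat set \<Rightarrow>\<^sub>0 nat) \<Rightarrow> nat" where
  "square_weight m = (\<Sum>e \<in> Poly_Mapping.keys m. Poly_Mapping.lookup m e * card e ^ 2)"

lemma square_weight_add: "square_weight (a + b) = square_weight a + square_weight b"
  unfolding square_weight_def
  by (rule setsum_keys_plus_distrib[where f="\<lambda>k v. v * card k ^ 2"]) (auto simp: algebra_simps)

lemma square_weight_single [simp]: "square_weight (Poly_Mapping.single e k) = k * card e ^ 2"
  unfolding square_weight_def by simp

lemma square_weight_split_less:
  assumes "a \<inter> b = {}" "finite a" "finite b" "a \<noteq> {}" "b \<noteq> {}"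
  shows "square_weight (m + Poly_Mapping.single a 1 + Poly_Mapping.single b 1)
       < square_weight (m + Poly_Mapping.single (a \<union> b) 1)"
proof -
  have "card a > 0" "card b > 0"
    using assms by auto
  then have "card a ^ 2 + card b ^ 2 < (card a + card b) ^ 2"
    by (simp add: power2_eq_square algebra_simps)
  then show ?thesis
    using assms by (simp add: square_weight_add card_Un_disjoint)
qed

lemma toric_monom_split:
  assumes "a \<inter> b = {}" "finite a" "finite b"
  shows "toric_monom (m + Poly_Mapping.single a 1 + Poly_Mapping.single b 1)
       = toric_monom (m + Poly_Mapping.single (a \<union> b) 1)"
  using assms by (simp add: toric_monom_add edge_monom_union mult.assoc)

lemma monomial_reduction:
  assumes decomp: "edges_decompose E F" and binomials: "splitting_binomials E \<subseteq> H"
    and "Poly_Mapping.keys m \<subseteq> E"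
  shows "\<exists>m'. Poly_Mapping.keys m' \<subseteq> F \<and> toric_monom m' = (toric_monom m :: (nat, 'k::comm_ring_1) mpoly)
           \<and> Poly_Mapping.single m (1::'k) - Poly_Mapping.single m' 1 \<in> ideal_in (poly_ring E) H"
  using assms(3)
proof (induction "square_weight m" arbitrary: m rule: less_induct)
  case less
  show ?case
  proof (cases "Poly_Mapping.keys m \<subseteq> F")
    case True
    then show ?thesis
      using ideal_in_zero by fastforce
  next
    case False
    then obtain e where e: "e \<in> Poly_Mapping.keys m" "e \<notin> F"
      by blast
    with less.prems have "e \<in> E - F"
      by blast
    with decomp have "finite e"
      and "\<exists>a b. a \<in> E \<and> b \<in> E \<and> e = a \<union> b \<and> a \<inter> b = {} \<and> a \<noteq> {} \<and> b \<noteq> {}"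
      unfolding edges_decompose_def by auto
    then obtain a b where ab: "a \<in> E" "b \<in> E" "e = a \<union> b" "a \<inter> b = {}" "a \<noteq> {}" "b \<noteq> {}"
      and fin: "finite a" "finite b"
      by auto
    define m1 where "m1 = m - Poly_Mapping.single e 1"
    have m: "m = m1 + Poly_Mapping.single e 1"
      using e(1) by (intro poly_mapping_eqI)
        (auto simp: m1_def lookup_add lookup_minus lookup_single when_def in_keys_iff)
    have keys_m1: "Poly_Mapping.keys m1 \<subseteq> E"
      using less.prems by (auto simp: m1_def in_keys_iff lookup_minus)
    define m2 where "m2 = m1 + Poly_Mapping.single a 1 + Poly_Mapping.single b 1"
    have "Poly_Mapping.keys m2 \<subseteq> E"
      unfolding m2_def using keys_m1 ab keys_add_single[of "m1 + Poly_Mapping.single a 1" b 1]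
        keys_add_single[of m1 a 1] by blast
    moreover have "square_weight m2 < square_weight m"
      unfolding m2_def m ab(3) using square_weight_split_less[OF ab(4) fin ab(5,6)] .
    ultimately obtain m' where m': "Poly_Mapping.keys m' \<subseteq> F"
      "toric_monom m' = (toric_monom m2 :: (nat, 'k) mpoly)"
      "Poly_Mapping.single m2 (1::'k) - Poly_Mapping.single m' 1 \<in> ideal_in (poly_ring E) H"
      using less.hyps by blast
    have "toric_monom m2 = (toric_monom m :: (nat, 'k) mpoly)"
      unfolding m2_def m ab(3) using toric_monom_split[OF ab(4) fin] .
    moreover have step: "Poly_Mapping.single m (1::'k) - Poly_Mapping.single m2 1 \<in> ideal_in (poly_ring E) H"
    proof -
      have "Poly_Mapping.single m (1::'k) - Poly_Mapping.single m2 1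
            = Poly_Mapping.single m1 1 * split_binomial a b"
        by (simp add: split_binomial_def right_diff_distrib mult_single m2_def m ab(3) add.assoc)
      moreover have "split_binomial a b \<in> ideal_in (poly_ring E) H"
        using ab fin less.prems e(1) binomials ideal_in_generators
        unfolding splitting_binomials_def by blast
      ultimately show ?thesis
        using keys_m1 by (simp add: ideal_in_mult poly_ring_single)
    qed
    ultimately show ?thesis
      using m' ideal_in_add[OF step m'(3)] by (intro exI[of _ m']) simp
  qed
qed

lemma polynomial_reduction:
  assumes "edges_decompose E F" "splitting_binomials E \<subseteq> H" "p \<in> poly_ring E"
  shows "\<exists>p' \<in> poly_ring F. toric_hom p' = toric_hom p \<and> p - p' \<in> ideal_in (poly_ring E) H"
proof -
  have "\<forall>m \<in> Poly_Mapping.keys p. \<exists>m'. Poly_Mapping.keys m' \<subseteq> F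
      \<and> toric_monom m' = (toric_monom m :: (nat, 'a) mpoly)
      \<and> Poly_Mapping.single m (1::'a) - Poly_Mapping.single m' 1 \<in> ideal_in (poly_ring E) H"
    using monomial_reduction[OF assms(1,2)] assms(3) unfolding poly_ring_def by blast
  then obtain red where red: "\<And>m. m \<in> Poly_Mapping.keys p \<Longrightarrow> Poly_Mapping.keys (red m) \<subseteq> F
      \<and> toric_monom (red m) = (toric_monom m :: (nat, 'a) mpoly)
      \<and> Poly_Mapping.single m (1::'a) - Poly_Mapping.single (red m) 1 \<in> ideal_in (poly_ring E) H"
    by metis
  define p' where "p' = (\<Sum>m \<in> Poly_Mapping.keys p. Poly_Mapping.single (red m) (Poly_Mapping.lookup p m))"
  have "p' \<in> poly_ring F"
    unfolding p'_def using red by (intro poly_ring_sum poly_ring_single) blast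
  moreover have "toric_hom p' = (\<Sum>m \<in> Poly_Mapping.keys p. Const (Poly_Mapping.lookup p m) * toric_monom (red m))"
    unfolding p'_def by (simp add: toric_hom_sum toric_hom_single)
  then have "toric_hom p' = toric_hom p"
    using red by (simp add: toric_hom_eq_sum_toric_monom)
  moreover have "p - p' = (\<Sum>m \<in> Poly_Mapping.keys p. Const (Poly_Mapping.lookup p m)
                     * (Poly_Mapping.single m 1 - Poly_Mapping.single (red m) 1))"
    unfolding p'_def
    by (subst (1) poly_mapping_sum_single) (simp add: sum_subtractf right_diff_distrib Const_mult_single)
  then have "p - p' \<in> ideal_in (poly_ring E) H"
    using red by (auto intro!: ideal_in_sum ideal_in_mult)
  ultimately show ?thesis
    by blast
qed

lemma toric_ideal_generated_by_decomposition:
  fixes G :: "(nat set, 'k::comm_ring_1) mpoly set"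
  assumes "F \<subseteq> E" "edges_decompose E F" and G: "ideal_in (poly_ring F) G = toric_ideal F"
  shows "ideal_in (poly_ring E) (G \<union> splitting_binomials E) = toric_ideal E"
proof
  have "G \<subseteq> toric_ideal F"
    using G ideal_in_generators by blast
  then show "ideal_in (poly_ring E) (G \<union> splitting_binomials E) \<subseteq> toric_ideal E"
    using toric_ideal_mono[OF assms(1)] splitting_binomials_subset_toric_ideal
    by (intro ideal_in_toric_ideal) blast
  have G_in: "ideal_in (poly_ring F) G \<subseteq> ideal_in (poly_ring E) (G \<union> splitting_binomials E)"
    using \<open>G \<subseteq> toric_ideal F\<close> assms(1) by (intro ideal_in_poly_ring_mono) (auto simp: toric_ideal_def)
  show "toric_ideal E \<subseteq> ideal_in (poly_ring E) (G \<union> splitting_binomials E)"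
  proof
    fix p :: "(nat set, 'k) mpoly" assume "p \<in> toric_ideal E"
    then obtain p' where "p' \<in> poly_ring F" "toric_hom p' = 0"
      and diff: "p - p' \<in> ideal_in (poly_ring E) (G \<union> splitting_binomials E)"
      using polynomial_reduction[OF assms(2), of "G \<union> splitting_binomials E" p]
      unfolding toric_ideal_def by auto
    then have "p' \<in> ideal_in (poly_ring E) (G \<union> splitting_binomials E)"
      using G G_in unfolding toric_ideal_def by blast
    from ideal_in_add[OF diff this] show "p \<in> ideal_in (poly_ring E) (G \<union> splitting_binomials E)"
      by simp
  qed
qed

lemma generated_in_degree_le_decomposition:
  assumes "F \<subseteq> E" "edges_decompose E F" "2 \<le> d"
    and "generated_in_degree_le (poly_ring F) (toric_ideal F :: (nat set, 'k::comm_ring_1) mpoly set) d"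
  shows "generated_in_degree_le (poly_ring E) (toric_ideal E :: (nat set, 'k) mpoly set) d"
proof -
  obtain G where G: "G \<subseteq> toric_ideal F" "\<forall>g \<in> G. total_deg g \<le> d"
    "ideal_in (poly_ring F) G = (toric_ideal F :: (nat set, 'k) mpoly set)"
    using assms(4) unfolding generated_in_degree_le_def by blast
  have "G \<union> splitting_binomials E \<subseteq> toric_ideal E"
    using G(1) toric_ideal_mono[OF assms(1)] splitting_binomials_subset_toric_ideal by blast
  moreover have "\<forall>g \<in> G \<union> splitting_binomials E. total_deg g \<le> d"
    using G(2) order.trans[OF total_deg_split_binomial assms(3)]
    unfolding splitting_binomials_def by blast
  ultimately show ?thesis
    unfolding generated_in_degree_le_def
    using toric_ideal_generated_by_decomposition[OF assms(1,2) G(3)] by blast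
qed

section \<open>Linear forms in toric ideals\<close>

definition edge_exponent :: "nat set \<Rightarrow> (nat \<Rightarrow>\<^sub>0 nat)" where
  "edge_exponent e = (\<Sum>j\<in>e. Poly_Mapping.single j 1)"

lemma prod_single_one:
  "finite A \<Longrightarrow> (\<Prod>i\<in>A. Poly_Mapping.single (f i) (1::'k::comm_ring_1)) = Poly_Mapping.single (\<Sum>i\<in>A. f i) 1"
  by (induction A rule: finite_induct) (auto simp: mult_single)

lemma edge_monom_eq_single:
  "finite e \<Longrightarrow> edge_monom e = (Poly_Mapping.single (edge_exponent e) 1 :: (nat, 'k::comm_ring_1) mpoly)"
  unfolding edge_monom_def edge_exponent_def Var_def by (rule prod_single_one)

lemma lookup_edge_exponent:
  "finite e \<Longrightarrow> Poly_Mapping.lookup (edge_exponent e) j = (if j \<in> e then 1 else 0)"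
  unfolding edge_exponent_def by (simp add: lookup_sum lookup_single when_def)

lemma edge_exponent_inject:
  "finite e \<Longrightarrow> finite e' \<Longrightarrow> edge_exponent e = edge_exponent e' \<longleftrightarrow> e = e'"
  by (metis lookup_edge_exponent one_neq_zero subsetI subset_antisym)

lemma edge_exponent_eq_zero_iff: "finite e \<Longrightarrow> edge_exponent e = 0 \<longleftrightarrow> e = {}"
  by (metis all_not_in_conv lookup_edge_exponent lookup_zero one_neq_zero edge_exponent_def sum.empty)

lemma toric_hom_eq_zero_imp_eq_zero:
  fixes p :: "(nat set, 'k::comm_ring_1) mpoly"
  assumes monom: "\<And>m. m \<in> Poly_Mapping.keys p \<Longrightarrow> toric_monom m = (Poly_Mapping.single (w m) 1 :: (nat, 'k) mpoly)"
    and inj: "inj_on w (Poly_Mapping.keys p)" and "toric_hom p = 0"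
  shows "p = 0"
proof (rule ccontr)
  assume "p \<noteq> 0"
  then obtain m0 where m0: "m0 \<in> Poly_Mapping.keys p"
    by (metis keys_eq_empty ex_in_conv)
  have "toric_hom p = (\<Sum>m \<in> Poly_Mapping.keys p. Poly_Mapping.single (w m) (Poly_Mapping.lookup p m))"
    unfolding toric_hom_eq_sum_toric_monom by (rule sum.cong) (simp_all add: monom Const_mult_single)
  then have "Poly_Mapping.lookup (toric_hom p) (w m0)
        = (\<Sum>m \<in> Poly_Mapping.keys p. Poly_Mapping.lookup (Poly_Mapping.single (w m) (Poly_Mapping.lookup p m)) (w m0))"
    by (simp add: lookup_sum)
  also have "\<dots> = (\<Sum>m \<in> Poly_Mapping.keys p. if m = m0 then Poly_Mapping.lookup p m else 0)"
    using m0 inj by (intro sum.cong) (auto simp: lookup_single when_def inj_on_eq_iff)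
  also have "\<dots> = Poly_Mapping.lookup p m0"
    using m0 by simp
  finally show False
    using assms(3) m0 by (simp add: in_keys_iff)
qed

lemma toric_ideal_linear_eq_zero:
  assumes edges: "\<And>e. e \<in> E \<Longrightarrow> finite e \<and> e \<noteq> {}"
    and g: "g \<in> toric_ideal E" and "total_deg g \<le> 1"
  shows "g = 0"
proof (rule toric_hom_eq_zero_imp_eq_zero[where w = "\<lambda>m. \<Sum>e \<in> Poly_Mapping.keys m. edge_exponent e"])
  have linear: "m = 0 \<or> (\<exists>e \<in> E. m = Poly_Mapping.single e 1)" if "m \<in> Poly_Mapping.keys g" for m
  proof -
    have "Poly_Mapping.keys m \<subseteq> E"
      using g that unfolding toric_ideal_def poly_ring_def by blast
    moreover have "monom_deg m \<le> 1"
      using assms(3) that unfolding total_deg_le_iff by blast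
    ultimately show ?thesis
      using monom_deg_le_one by fastforce
  qed
  show "toric_monom m = Poly_Mapping.single (\<Sum>e \<in> Poly_Mapping.keys m. edge_exponent e) 1"
    if "m \<in> Poly_Mapping.keys g" for m
    using linear[OF that]
  proof
    assume "\<exists>e \<in> E. m = Poly_Mapping.single e 1"
    then obtain e where "e \<in> E" "m = Poly_Mapping.single e 1"
      by blast
    then show ?thesis
      using edges by (simp add: edge_monom_eq_single)
  qed simp
  show "inj_on (\<lambda>m. \<Sum>e \<in> Poly_Mapping.keys m. edge_exponent e) (Poly_Mapping.keys g)"
  proof (rule inj_onI)
    fix m m' assume "m \<in> Poly_Mapping.keys g" "m' \<in> Poly_Mapping.keys g"
      and eq: "(\<Sum>e \<in> Poly_Mapping.keys m. edge_exponent e) = (\<Sum>e \<in> Poly_Mapping.keys m'. edge_exponent e)"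
    with linear consider "m = 0" "m' = 0"
      | e where "e \<in> E" "m = Poly_Mapping.single e 1" "m' = 0"
      | e where "e \<in> E" "m = 0" "m' = Poly_Mapping.single e 1"
      | e e' where "e \<in> E" "e' \<in> E" "m = Poly_Mapping.single e 1" "m' = Poly_Mapping.single e' 1"
      by metis
    then show "m = m'"
      by cases (use eq edges in \<open>auto simp: edge_exponent_inject edge_exponent_eq_zero_iff\<close>)
  qed
  show "toric_hom g = 0"
    using g unfolding toric_ideal_def by blast
qed

lemma generated_in_degree_le_toric_ideal_ge_two:
  assumes edges: "\<And>e. e \<in> E \<Longrightarrow> finite e \<and> e \<noteq> {}"
    and nonzero: "toric_ideal E \<noteq> ({0} :: (nat set, 'k::comm_ring_1) mpoly set)"
    and "generated_in_degree_le (poly_ring E) (toric_ideal E :: (nat set, 'k) mpoly set) d"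
  shows "2 \<le> d"
proof (rule ccontr)
  assume "\<not> 2 \<le> d"
  obtain G where G: "G \<subseteq> toric_ideal E" "\<forall>g \<in> G. total_deg g \<le> d"
    "ideal_in (poly_ring E) G = (toric_ideal E :: (nat set, 'k) mpoly set)"
    using assms(3) unfolding generated_in_degree_le_def by blast
  have "G \<subseteq> {0}"
    using G(1,2) \<open>\<not> 2 \<le> d\<close> toric_ideal_linear_eq_zero[OF edges] by fastforce
  then have "ideal_in (poly_ring E) G \<subseteq> {0}"
    by (intro ideal_in_least) auto
  moreover have "0 \<in> toric_ideal E"
    unfolding toric_ideal_def by simp
  ultimately show False
    using G(3) nonzero by blast
qed

lemma toric_ideal_ne_zero:
  assumes "{1, 2} \<in> E" "{3, 4} \<in> E" "{1, 3} \<in> E" "{2, 4} \<in> E"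
  shows "toric_ideal E \<noteq> ({0} :: (nat set, 'k::comm_ring_1) mpoly set)"
proof -
  define mA where "mA = Poly_Mapping.single {1, 2::nat} (1::nat) + Poly_Mapping.single {3, 4} 1"
  define mB where "mB = Poly_Mapping.single {1, 3::nat} (1::nat) + Poly_Mapping.single {2, 4} 1"
  define f where "f = Poly_Mapping.single mA (1::'k) - Poly_Mapping.single mB 1"
  have "f \<in> poly_ring E"
    unfolding f_def mA_def mB_def using assms keys_add_single[of "Poly_Mapping.single _ (1::nat)"]
    by (intro poly_ring_diff poly_ring_single) (fastforce+)
  moreover have "toric_hom f = 0"
  proof -
    have "edge_monom {1, 2} * edge_monom {3, 4} = (edge_monom ({1, 2} \<union> {3, 4}) :: (nat, 'k) mpoly)"
      by (rule edge_monom_union[symmetric]) auto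
    also have "{1, 2} \<union> {3, 4} = {1, 3} \<union> {2, 4::nat}"
      by auto
    also have "edge_monom \<dots> = (edge_monom {1, 3} * edge_monom {2, 4} :: (nat, 'k) mpoly)"
      by (rule edge_monom_union) auto
    finally show ?thesis
      unfolding f_def mA_def mB_def by (simp add: toric_hom_diff toric_hom_single toric_monom_add Const_def)
  qed
  moreover have "Poly_Mapping.lookup mA {1, 2} \<noteq> Poly_Mapping.lookup mB {1, 2}"
    unfolding mA_def mB_def by (simp add: lookup_add lookup_single doubleton_eq_iff)
  then have "Poly_Mapping.lookup f mA = 1"
    unfolding f_def by (auto simp: lookup_minus lookup_single when_def)
  then have "f \<noteq> 0"
    by auto
  ultimately show ?thesis
    unfolding toric_ideal_def by blast
qed

section \<open>All edges versus edges of size 2 and 3\<close>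

lemma E_23_subset_E_all: "E_23 n \<subseteq> E_all n"
  unfolding E_23_def E_all_def by blast

lemma E_23_finite_nonempty: "e \<in> E_23 n \<Longrightarrow> finite e \<and> e \<noteq> {}"
  unfolding E_23_def using finite_subset by fastforce

lemma E_all_eq_E_23:
  assumes "n \<le> 3"
  shows "E_all n = E_23 n"
proof -
  have "card e \<le> 3" if "e \<subseteq> {1..n}" for e
    using card_mono[OF finite_atLeastAtMost that] assms by simp
  then show ?thesis
    unfolding E_all_def E_23_def by auto
qed

lemma edges_decompose_E_all_E_23: "edges_decompose (E_all n) (E_23 n)"
  unfolding edges_decompose_def
proof
  fix e assume e: "e \<in> E_all n - E_23 n"
  then have fin: "finite e" and sub: "e \<subseteq> {1..n}" and card: "4 \<le> card e"
    unfolding E_all_def E_23_def using finite_subset by auto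
  obtain a where a: "a \<subseteq> e" "card a = 2"
    using obtain_subset_with_card_n[of 2 e] card by auto
  have card_rest: "card (e - a) = card e - 2"
    using a fin by (simp add: card_Diff_subset finite_subset)
  have "a \<in> E_all n" "e - a \<in> E_all n"
    using a sub card card_rest unfolding E_all_def by auto
  moreover have "e = a \<union> (e - a)" "a \<inter> (e - a) = {}"
    using a by auto
  moreover have "a \<noteq> {}" "e - a \<noteq> {}"
    using a card card_rest by auto
  ultimately show "finite e \<and> (\<exists>a b. a \<in> E_all n \<and> b \<in> E_all n \<and> e = a \<union> b \<and> a \<inter> b = {}
                       \<and> a \<noteq> {} \<and> b \<noteq> {})"
    using fin by blast
qed

theorem lemma5p5:
  fixes n d :: nat
  assumes "generated_in_degree_le (poly_ring (E_23 n)) (toric_ideal (E_23 n) :: (nat set, 'k::field) mpoly set) d"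
  shows "generated_in_degree_le (poly_ring (E_all n)) (toric_ideal (E_all n) :: (nat set, 'k) mpoly set) d"
proof (cases "n \<le> 3")
  case True
  then show ?thesis
    using assms by (simp add: E_all_eq_E_23)
next
  case False
  then have "{1, 2} \<in> E_23 n" "{3, 4} \<in> E_23 n" "{1, 3} \<in> E_23 n" "{2, 4} \<in> E_23 n"
    unfolding E_23_def by auto
  then have "toric_ideal (E_23 n) \<noteq> ({0} :: (nat set, 'k) mpoly set)"
    by (rule toric_ideal_ne_zero)
  then have "2 \<le> d"
    using assms by (intro generated_in_degree_le_toric_ideal_ge_two[OF E_23_finite_nonempty])
  then show ?thesis
    using generated_in_degree_le_decomposition[OF E_23_subset_E_all edges_decompose_E_all_E_23 _ assms]
    by simp
qed

end
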